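(* Let $G$ be a claw-free graph. Then either $G$ is a quasi-line graph, or there is a vertex $v$ of $G$ with $$\deg_{G^2}(v)\le \omega(G)^2+\frac{\omega(G)+1}{2}$$ such that $N_G(v)$ is a clique in $(G\setminus v)^2$ (i.e. any two distinct vertices of $N_G(v)$ are at distance at most $2$ in $G\setminus v$).
   Context: Graphs are finite and simple. A graph is claw-free if it has no induced $K_{1,3}$. A graph is a quasi-line graph if for every vertex $v$, the subgraph induced by $N_G(v)$ can be covered by two cliques (its vertex set is a union of two cliques). $G^2$ is the graph on $V(G)$ where distinct vertices are adjacent iff at distance at most $2$ in $G$; $\deg_{G^2}(v)$ is the degree of $v$ in $G^2$. $G\setminus v$ is the graph obtained by deleting $v$. $\omega$ is the clique number. *)

theory Defs
  imports Complex_Main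
begin

definition simple_graph :: "'a set \<Rightarrow> ('a \<Rightarrow> 'a \<Rightarrow> bool) \<Rightarrow> bool" where
  "simple_graph V E \<longleftrightarrow> finite V \<and> (\<forall>u v. E u v \<longrightarrow> u \<in> V \<and> v \<in> V)
     \<and> (\<forall>u v. E u v \<longrightarrow> E v u) \<and> (\<forall>v. \<not> E v v)"

definition nbhd :: "'a set \<Rightarrow> ('a \<Rightarrow> 'a \<Rightarrow> bool) \<Rightarrow> 'a \<Rightarrow> 'a set" where
  "nbhd V E v = {u \<in> V. E v u}"

definition is_clique :: "'a set \<Rightarrow> ('a \<Rightarrow> 'a \<Rightarrow> bool) \<Rightarrow> 'a set \<Rightarrow> bool" where
  "is_clique V E K \<longleftrightarrow> K \<subseteq> V \<and> (\<forall>x\<in>K. \<forall>y\<in>K. x \<noteq> y \<longrightarrow> E x y)"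

definition claw_free :: "'a set \<Rightarrow> ('a \<Rightarrow> 'a \<Rightarrow> bool) \<Rightarrow> bool" where
  "claw_free V E \<longleftrightarrow> \<not> (\<exists>v a b c. v \<in> V \<and> a \<in> nbhd V E v \<and> b \<in> nbhd V E v \<and> c \<in> nbhd V E v
      \<and> a \<noteq> b \<and> a \<noteq> c \<and> b \<noteq> c \<and> \<not> E a b \<and> \<not> E a c \<and> \<not> E b c)"

definition quasi_line :: "'a set \<Rightarrow> ('a \<Rightarrow> 'a \<Rightarrow> bool) \<Rightarrow> bool" where
  "quasi_line V E \<longleftrightarrow> (\<forall>v\<in>V. \<exists>K1 K2. is_clique V E K1 \<and> is_clique V E K2 \<and> nbhd V E v = K1 \<union> K2)"

definition clique_number :: "'a set \<Rightarrow> ('a \<Rightarrow> 'a \<Rightarrow> bool) \<Rightarrow> nat" where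
  "clique_number V E = Max (card ` {K. is_clique V E K})"

definition induced :: "'a set \<Rightarrow> ('a \<Rightarrow> 'a \<Rightarrow> bool) \<Rightarrow> 'a \<Rightarrow> 'a \<Rightarrow> bool" where
  "induced S E = (\<lambda>u v. u \<in> S \<and> v \<in> S \<and> E u v)"

definition dist_le2 :: "'a set \<Rightarrow> ('a \<Rightarrow> 'a \<Rightarrow> bool) \<Rightarrow> 'a \<Rightarrow> 'a \<Rightarrow> bool" where
  "dist_le2 V E u v \<longleftrightarrow> E u v \<or> (\<exists>w\<in>V. E u w \<and> E w v)"

definition deg_sq :: "'a set \<Rightarrow> ('a \<Rightarrow> 'a \<Rightarrow> bool) \<Rightarrow> 'a \<Rightarrow> nat" where
  "deg_sq V E v = card {u \<in> V. u \<noteq> v \<and> dist_le2 V E v u}"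

end

theory Submission
  imports Defs
begin

text \<open>If \<open>G\<close> is not quasi-line, some vertex \<open>v\<close> has a neighbourhood \<open>N\<close> that is not the union
  of two cliques.
  Claw-freeness at \<open>v\<close> makes the complement \<open>H\<close> of \<open>G[N]\<close> triangle-free, and \<open>H\<close> is not
  bipartite, so it has a shortest odd cycle \<open>C\<close>; this cycle has length at least 5 and every vertex
  has at most two \<open>H\<close>-neighbours on it.

  If two non-adjacent \<open>x, y \<in> N\<close> had no common neighbour besides \<open>v\<close>, their \<open>H\<close>-neighbourhoods
  would be two cliques covering \<open>N\<close>; so \<open>N\<close> is a clique of \<open>(G - v)\<^sup>2\<close>.

  For the degree bound, two applications of claw-freeness show that every vertex at distance 2
  from \<open>v\<close> is adjacent to one of three consecutive vertices of \<open>C\<close>. Each of them has at most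
  \<open>\<omega> - 1\<close> neighbours outside \<open>N[v]\<close> (they form a clique with it), and \<open>N\<close>, which has no
  independent triple, has fewer than \<open>\<omega>(\<omega> + 1)/2\<close> vertices by the Ramsey bound.\<close>

section \<open>Walks and odd closed walks\<close>

definition walk :: "('a \<Rightarrow> 'a \<Rightarrow> bool) \<Rightarrow> (nat \<Rightarrow> 'a) \<Rightarrow> nat \<Rightarrow> bool" where
  "walk R f n \<longleftrightarrow> (\<forall>i<n. R (f i) (f (Suc i)))"

definition closed_walk :: "('a \<Rightarrow> 'a \<Rightarrow> bool) \<Rightarrow> (nat \<Rightarrow> 'a) \<Rightarrow> nat \<Rightarrow> bool" where
  "closed_walk R f n \<longleftrightarrow> walk R f n \<and> f n = f 0"

definition walk_append :: "(nat \<Rightarrow> 'a) \<Rightarrow> nat \<Rightarrow> (nat \<Rightarrow> 'a) \<Rightarrow> nat \<Rightarrow> 'a" where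
  "walk_append f n g = (\<lambda>i. if i \<le> n then f i else g (i - n))"

lemma walk_append:
  assumes "walk R f n" "walk R g m" "g 0 = f n"
  shows "walk R (walk_append f n g) (n + m)"
  unfolding walk_def
proof (intro allI impI)
  fix i assume i: "i < n + m"
  show "R (walk_append f n g i) (walk_append f n g (Suc i))"
  proof (cases "i < n")
    case True
    then show ?thesis using assms(1) by (simp add: walk_def walk_append_def)
  next
    case False
    then have "R (g (i - n)) (g (Suc (i - n)))" and "Suc i - n = Suc (i - n)"
      using i assms(2) by (auto simp: walk_def)
    then show ?thesis using False assms(3) by (cases "i = n") (auto simp: walk_append_def)
  qed
qed

lemma walk_append_0 [simp]: "walk_append f n g 0 = f 0"
  by (simp add: walk_append_def)

lemma walk_append_end: "g 0 = f n \<Longrightarrow> walk_append f n g (n + m) = g m"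
  by (cases m) (auto simp: walk_append_def)

lemma walk_shift: "walk R f n \<Longrightarrow> a \<le> b \<Longrightarrow> b \<le> n \<Longrightarrow> walk R (\<lambda>i. f (a + i)) (b - a)"
  by (auto simp: walk_def)

lemma walk_rev:
  assumes sym: "\<And>x y. R x y \<Longrightarrow> R y x" and "walk R g m"
  shows "walk R (\<lambda>i. g (m - i)) m"
  unfolding walk_def
proof (intro allI impI)
  fix i assume i: "i < m"
  then have "R (g (m - Suc i)) (g (Suc (m - Suc i)))" and "Suc (m - Suc i) = m - i"
    using assms(2) by (auto simp: walk_def)
  then show "R (g (m - i)) (g (m - Suc i))" using sym by simp
qed

text \<open>A walk between two vertices of a closed walk cuts it into two closed walks, one through
  each of the two arcs.\<close>
lemma closed_walk_split:
  assumes sym: "\<And>x y. R x y \<Longrightarrow> R y x"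
    and f: "closed_walk R f k" and ab: "a \<le> b" "b \<le> k"
    and g: "walk R g m" "g 0 = f b" "g m = f a"
  shows "\<exists>h. closed_walk R h (b - a + m)" and "\<exists>h. closed_walk R h (k - (b - a) + m)"
proof -
  have fw: "walk R f k" and fk: "f k = f 0" using f by (auto simp: closed_walk_def)
  let ?inner = "\<lambda>i. f (a + i)"
  have j: "g 0 = ?inner (b - a)" using g(2) ab by simp
  have "walk R (walk_append ?inner (b - a) g) (b - a + m)"
    using walk_append[OF walk_shift[OF fw ab] g(1) j] .
  moreover have "walk_append ?inner (b - a) g (b - a + m) = walk_append ?inner (b - a) g 0"
    using walk_append_end[of g ?inner "b - a" m, OF j] g(3) by simp
  ultimately show "\<exists>h. closed_walk R h (b - a + m)" unfolding closed_walk_def by blast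
  let ?tail = "\<lambda>i. f (b + i)" and ?back = "\<lambda>i. g (m - i)"
  let ?outer = "walk_append ?tail (k - b) f"
  have j1: "f 0 = ?tail (k - b)" using fk ab by simp
  have "walk R f a" using fw ab by (simp add: walk_def)
  from walk_append[OF walk_shift[OF fw ab(2) order.refl] this j1]
  have outer: "walk R ?outer (k - b + a)" by simp
  have j2: "?back 0 = ?outer (k - b + a)"
    using walk_append_end[of f ?tail "k - b" a, OF j1] g(3) by simp
  let ?h = "walk_append ?outer (k - b + a) ?back"
  have "walk R ?h (k - b + a + m)" using walk_append[OF outer walk_rev[OF sym g(1)] j2] .
  moreover have "?h (k - b + a + m) = ?h 0"
    using walk_append_end[of ?back ?outer "k - b + a" m, OF j2] g(2) by simp
  moreover have "k - b + a + m = k - (b - a) + m" using ab by simp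
  ultimately show "\<exists>h. closed_walk R h (k - (b - a) + m)" unfolding closed_walk_def by metis
qed

definition parity_walk :: "('a \<Rightarrow> 'a \<Rightarrow> bool) \<Rightarrow> 'a \<Rightarrow> 'a \<Rightarrow> bool \<Rightarrow> bool" where
  "parity_walk R a b p \<longleftrightarrow> (\<exists>f n. walk R f n \<and> f 0 = a \<and> f n = b \<and> odd n = p)"

lemma parity_walk_refl: "parity_walk R a a False"
  unfolding parity_walk_def by (rule exI[of _ "\<lambda>_. a"], rule exI[of _ 0]) (simp add: walk_def)

lemma parity_walk_edge: "R a b \<Longrightarrow> parity_walk R a b True"
  unfolding parity_walk_def
  by (rule exI[of _ "\<lambda>i. if i = 0 then a else b"], rule exI[of _ 1]) (simp add: walk_def)

lemma parity_walk_sym: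
  assumes sym: "\<And>x y. R x y \<Longrightarrow> R y x" and "parity_walk R a b p"
  shows "parity_walk R b a p"
proof -
  obtain f n where f: "walk R f n" "f 0 = a" "f n = b" "odd n = p"
    using assms(2) unfolding parity_walk_def by blast
  show ?thesis unfolding parity_walk_def
    using walk_rev[OF sym f(1)] f by (intro exI[of _ "\<lambda>i. f (n - i)"] exI[of _ n]) simp
qed

lemma parity_walk_trans:
  assumes "parity_walk R a b p" "parity_walk R b c q"
  shows "parity_walk R a c (p \<noteq> q)"
proof -
  obtain f n g m where f: "walk R f n" "f 0 = a" "f n = b" "odd n = p"
    and g: "walk R g m" "g 0 = b" "g m = c" "odd m = q"
    using assms unfolding parity_walk_def by blast
  have j: "g 0 = f n" using f g by simp
  show ?thesis unfolding parity_walk_def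
    using walk_append[OF f(1) g(1) j] walk_append_end[of g f n m, OF j] f g
    by (intro exI[of _ "walk_append f n g"] exI[of _ "n + m"]) auto
qed

definition has_odd_closed_walk :: "('a \<Rightarrow> 'a \<Rightarrow> bool) \<Rightarrow> bool" where
  "has_odd_closed_walk R \<longleftrightarrow> (\<exists>f n. odd n \<and> closed_walk R f n)"

lemma has_odd_closed_walk_if_parity_walk: "parity_walk R a a True \<Longrightarrow> has_odd_closed_walk R"
  unfolding parity_walk_def has_odd_closed_walk_def closed_walk_def by metis

text \<open>Colour each vertex by the parity of a walk to it from a fixed root of its component.\<close>
lemma bipartition_if_no_odd_closed_walk:
  assumes sym: "\<And>x y. R x y \<Longrightarrow> R y x" and no_odd: "\<not> has_odd_closed_walk R"
  obtains A B where "S = A \<union> B"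
    and "\<And>x y. x \<in> A \<Longrightarrow> y \<in> A \<Longrightarrow> \<not> R x y" and "\<And>x y. x \<in> B \<Longrightarrow> y \<in> B \<Longrightarrow> \<not> R x y"
proof -
  define root where "root a = (SOME r. \<exists>p. parity_walk R r a p)" for a
  have root: "\<exists>p. parity_walk R (root a) a p" for a
    unfolding root_def by (rule someI_ex) (metis parity_walk_refl)
  have same_root: "root x = root y" if "R x y" for x y
  proof -
    have "(\<exists>p. parity_walk R r x p) \<longleftrightarrow> (\<exists>p. parity_walk R r y p)" for r
      using parity_walk_trans[OF _ parity_walk_edge[of R, OF that]]
        parity_walk_trans[OF _ parity_walk_edge[of R, OF sym[OF that]]] by blast
    then show ?thesis unfolding root_def by simp
  qed
  have indep: "\<not> R x y" if "parity_walk R (root x) x p" "parity_walk R (root y) y p" for x y p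
  proof
    assume xy: "R x y"
    have "parity_walk R (root x) y (p \<noteq> True)"
      using parity_walk_trans[OF that(1) parity_walk_edge[of R, OF xy]] .
    moreover have "parity_walk R y (root x) p"
      using parity_walk_sym[OF sym that(2)] same_root[OF xy] by simp
    ultimately have "parity_walk R (root x) (root x) True"
      using parity_walk_trans by fastforce
    then show False using no_odd has_odd_closed_walk_if_parity_walk by metis
  qed
  show thesis
  proof
    show "S = {x \<in> S. parity_walk R (root x) x False} \<union> {x \<in> S. parity_walk R (root x) x True}"
      using root by (auto elim: allE[of _ True] allE[of _ False]) (metis (full_types))
  qed (use indep in blast)+
qed

section \<open>Shortest odd closed walks\<close>

definition shortest_odd_closed_walk :: "('a \<Rightarrow> 'a \<Rightarrow> bool) \<Rightarrow> (nat \<Rightarrow> 'a) \<Rightarrow> nat \<Rightarrow> bool" where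
  "shortest_odd_closed_walk R f k \<longleftrightarrow>
     odd k \<and> closed_walk R f k \<and> (\<forall>g n. odd n \<and> closed_walk R g n \<longrightarrow> k \<le> n)"

lemma shortest_odd_closed_walk_exists:
  assumes "has_odd_closed_walk R"
  obtains f k where "shortest_odd_closed_walk R f k"
proof -
  let ?P = "\<lambda>n. odd n \<and> (\<exists>f. closed_walk R f n)"
  define k where "k = (LEAST n. ?P n)"
  have "?P k" unfolding k_def
    by (rule LeastI_ex) (use assms in \<open>auto simp: has_odd_closed_walk_def\<close>)
  moreover have "k \<le> n" if "?P n" for n
    unfolding k_def using that by (rule Least_le)
  ultimately show thesis using that unfolding shortest_odd_closed_walk_def by blast
qed

context
  fixes R :: "'a \<Rightarrow> 'a \<Rightarrow> bool" and f :: "nat \<Rightarrow> 'a" and k :: nat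
  assumes sym: "\<And>x y. R x y \<Longrightarrow> R y x"
    and shortest: "shortest_odd_closed_walk R f k"
begin

lemma shortest_odd_closed_walk_edge: "i < k \<Longrightarrow> R (f i) (f (Suc i))"
  using shortest unfolding shortest_odd_closed_walk_def closed_walk_def walk_def by blast

lemma shortest_odd_closed_walk_closing_edge: "R (f (k - 1)) (f 0)"
proof -
  have "0 < k" using shortest unfolding shortest_odd_closed_walk_def by (cases k) auto
  then show ?thesis using shortest_odd_closed_walk_edge[of "k - 1"] shortest
    unfolding shortest_odd_closed_walk_def closed_walk_def by simp
qed

text \<open>Replacing either arc of the cycle between positions \<open>a \<le> b\<close> by a walk of length \<open>m\<close>
  gives a closed walk; by minimality it is not both odd and shorter than the cycle.\<close>
lemma shortest_odd_closed_walk_shortcut: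
  assumes "a \<le> b" "b \<le> k" "walk R g m" "g 0 = f b" "g m = f a"
  shows "odd (b - a + m) \<longrightarrow> k \<le> b - a + m" and "odd (k - (b - a) + m) \<longrightarrow> k \<le> k - (b - a) + m"
proof -
  have f: "closed_walk R f k" and min: "\<And>g n. odd n \<Longrightarrow> closed_walk R g n \<Longrightarrow> k \<le> n"
    using shortest unfolding shortest_odd_closed_walk_def by auto
  show "odd (b - a + m) \<longrightarrow> k \<le> b - a + m" "odd (k - (b - a) + m) \<longrightarrow> k \<le> k - (b - a) + m"
    using closed_walk_split[OF sym f assms] min by blast+
qed

lemma shortest_odd_closed_walk_inj:
  assumes "i < j" "j < k"
  shows "f i \<noteq> f j"
proof
  define d where "d = j - i"
  assume "f i = f j"
  then have "walk R (\<lambda>_. f j) 0" "(\<lambda>_. f j) 0 = f j" "(\<lambda>_. f j) 0 = f i"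
    by (simp_all add: walk_def)
  from shortest_odd_closed_walk_shortcut[of i j, OF _ _ this] assms
  have "odd d \<longrightarrow> k \<le> d" "odd (k - d) \<longrightarrow> k \<le> k - d" by (simp_all add: d_def)
  moreover have "odd k" using shortest unfolding shortest_odd_closed_walk_def by simp
  moreover have "0 < d" "d < k" using assms unfolding d_def by auto
  ultimately show False by (cases "odd d") auto
qed

lemma shortest_odd_closed_walk_chordless:
  assumes "i < j" "j < k" "j \<noteq> Suc i" "\<not> (i = 0 \<and> j = k - 1)"
  shows "\<not> R (f i) (f j)"
proof
  define d where "d = j - i"
  assume "R (f i) (f j)"
  then have "walk R (\<lambda>n. if n = 0 then f j else f i) 1" using sym by (simp add: walk_def)
  from shortest_odd_closed_walk_shortcut[of i j, OF _ _ this] assms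
  have "odd (d + 1) \<longrightarrow> k \<le> d + 1" "odd (k - d + 1) \<longrightarrow> k \<le> k - d + 1"
    by (simp_all add: d_def)
  moreover have "odd k" using shortest unfolding shortest_odd_closed_walk_def by simp
  moreover have "1 < d" "d < k - 1" using assms unfolding d_def by auto
  ultimately show False by (cases "odd d") auto
qed

context
  assumes irrefl: "\<And>x. \<not> R x x"
    and triangle_free: "\<And>x y z. R x y \<Longrightarrow> R y z \<Longrightarrow> R x z \<Longrightarrow> False"
begin

lemma shortest_odd_closed_walk_length: "5 \<le> k"
proof -
  have fw: "walk R f k" "f k = f 0" and "odd k"
    using shortest unfolding shortest_odd_closed_walk_def closed_walk_def by auto
  have "k \<noteq> 1" using fw irrefl unfolding walk_def by force
  moreover have "k \<noteq> 3"
  proof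
    assume k: "k = 3"
    then have "R (f 0) (f 1)" "R (f 1) (f 2)" "R (f 2) (f 0)"
      using fw unfolding walk_def by (auto simp: numeral_eq_Suc)
    then show False using triangle_free sym by blast
  qed
  ultimately show ?thesis using \<open>odd k\<close> by (elim oddE) auto
qed

text \<open>Two cycle vertices with a common neighbour \<open>u\<close> are not consecutive (no triangles); the
  detour through \<open>u\<close> closes an odd walk shorter than the cycle unless they are at distance 2
  along it.\<close>
lemma shortest_odd_closed_walk_common_nbr:
  assumes "i < j" "j < k" "R u (f i)" "R u (f j)"
  shows "j - i = 2 \<or> j - i = k - 2"
proof -
  define d where "d = j - i"
  have "j \<noteq> Suc i"
    using assms shortest_odd_closed_walk_edge[of i] triangle_free by auto
  moreover have "\<not> (i = 0 \<and> j = k - 1)"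
    using assms shortest_odd_closed_walk_closing_edge triangle_free sym by blast
  ultimately have "1 < d" "d < k - 1" using assms unfolding d_def by auto
  have "walk R (\<lambda>n. if n = 0 then f j else if n = 1 then u else f i) 2"
    using assms sym by (auto simp: walk_def less_2_cases_iff)
  from shortest_odd_closed_walk_shortcut[of i j, OF _ _ this] assms
  have "odd (d + 2) \<longrightarrow> k \<le> d + 2" "odd (k - d + 2) \<longrightarrow> k \<le> k - d + 2"
    by (simp_all add: d_def)
  moreover have "odd k" using shortest unfolding shortest_odd_closed_walk_def by simp
  ultimately have "d = 2 \<or> d = k - 2" using \<open>1 < d\<close> \<open>d < k - 1\<close> by (cases "odd d") auto
  then show ?thesis unfolding d_def .
qed

lemma shortest_odd_closed_walk_two_nbrs:
  assumes "i < j" "j < l" "l < k" "R u (f i)" "R u (f j)"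
  shows "\<not> R u (f l)"
proof
  assume "R u (f l)"
  then have "j - i = 2 \<or> j - i = k - 2" "l - j = 2 \<or> l - j = k - 2" "l - i = 2 \<or> l - i = k - 2"
    using shortest_odd_closed_walk_common_nbr assms by (meson less_trans)+
  moreover have "odd k" "5 \<le> k"
    using shortest shortest_odd_closed_walk_length unfolding shortest_odd_closed_walk_def by auto
  ultimately show False using assms by (cases "k = 6") auto
qed

text \<open>At most two of the \<open>k \<ge> 5\<close> cycle vertices are neighbours of \<open>u\<close>, and each of them
  covers only two cycle edges.\<close>
lemma shortest_odd_closed_walk_non_nbr_edge: "\<exists>j<k. \<not> R u (f j) \<and> \<not> R u (f (Suc j))"
proof (rule ccontr)
  assume "\<not> ?thesis"
  then have hit: "R u (f j) \<or> R u (f (Suc j))" if "j < k" for j using that by blast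
  have k5: "5 \<le> k" and fk: "f k = f 0"
    using shortest_odd_closed_walk_length shortest
    unfolding shortest_odd_closed_walk_def closed_walk_def by auto
  define T where "T = {i. i < k \<and> R u (f i)}"
  have "finite T" unfolding T_def by simp
  have "card T \<le> 2"
  proof (rule ccontr)
    assume "\<not> card T \<le> 2"
    then obtain S where "S \<subseteq> T" "card S = 3"
      using obtain_subset_with_card_n[of 3 T] by force
    then obtain x y z where xyz: "x \<in> T" "y \<in> T" "z \<in> T" "x \<noteq> y" "y \<noteq> z" "x \<noteq> z"
      by (auto simp: card_3_iff)
    have no3: "\<not> (i \<in> T \<and> j \<in> T \<and> l \<in> T \<and> i < j \<and> j < l)" for i j l
      using shortest_odd_closed_walk_two_nbrs unfolding T_def by blast
    show False using no3 xyz
      by (cases x y rule: linorder_cases; cases y z rule: linorder_cases;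
          cases x z rule: linorder_cases) blast+
  qed
  define pred where "pred i = (if i = 0 then k - 1 else i - 1)" for i
  have "{..<k} \<subseteq> T \<union> pred ` T"
  proof
    fix j assume j: "j \<in> {..<k}"
    show "j \<in> T \<union> pred ` T"
    proof (cases "R u (f j)")
      case True
      then show ?thesis using j unfolding T_def by auto
    next
      case False
      let ?s = "if Suc j = k then 0 else Suc j"
      have "R u (f (Suc j))" using hit j False by auto
      then have "?s \<in> T" using j fk k5 unfolding T_def by auto
      moreover have "pred ?s = j" using j unfolding pred_def by auto
      ultimately show ?thesis by (metis UnI2 imageI)
    qed
  qed
  then have "k \<le> card (T \<union> pred ` T)"
    using \<open>finite T\<close> by (metis card_lessThan card_mono finite_UnI finite_imageI)
  also have "\<dots> \<le> card T + card T"
    using card_Un_le card_image_le[OF \<open>finite T\<close>] by (metis add_left_mono order_trans)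
  finally show False using \<open>card T \<le> 2\<close> k5 by simp
qed

end

end

section \<open>Claw-free graphs\<close>

locale finite_simple_graph =
  fixes V :: "'a set" and E :: "'a \<Rightarrow> 'a \<Rightarrow> bool"
  assumes simple: "simple_graph V E"
begin

lemma finite_vertices: "finite V"
  and adj_vertices: "E a b \<Longrightarrow> a \<in> V \<and> b \<in> V"
  and adj_sym: "E a b \<Longrightarrow> E b a"
  and adj_irrefl: "\<not> E a a"
  using simple unfolding simple_graph_def by blast+

lemma card_clique_le_clique_number:
  assumes "is_clique V E K"
  shows "card K \<le> clique_number V E"
proof -
  have "{K. is_clique V E K} \<subseteq> Pow V" unfolding is_clique_def by auto
  then have "finite (card ` {K. is_clique V E K})"
    using finite_vertices by (meson finite_Pow_iff finite_imageI finite_subset)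
  then show ?thesis unfolding clique_number_def using assms by (simp add: Max_ge)
qed

text \<open>The Ramsey bound \<open>R(3, t + 1) \<le> (t + 1)(t + 2)/2\<close>: split off a vertex \<open>x\<close>; its
  non-neighbours form a clique, its neighbours a set with smaller clique bound.\<close>
lemma card_le_if_no_independent_triple:
  assumes "S \<subseteq> V"
    and "\<And>a b c. a \<in> S \<Longrightarrow> b \<in> S \<Longrightarrow> c \<in> S \<Longrightarrow> a \<noteq> b \<Longrightarrow> a \<noteq> c \<Longrightarrow> b \<noteq> c \<Longrightarrow> E a b \<or> E a c \<or> E b c"
    and "\<And>K. K \<subseteq> S \<Longrightarrow> is_clique V E K \<Longrightarrow> card K \<le> t"
  shows "2 * card S \<le> t * (t + 3)"
  using assms
proof (induction t arbitrary: S)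
  case 0
  have "S = {}"
  proof (rule ccontr)
    assume "S \<noteq> {}"
    then obtain x where "x \<in> S" by blast
    then have "is_clique V E {x}" using "0.prems"(1) unfolding is_clique_def by auto
    then show False using "0.prems"(3)[of "{x}"] \<open>x \<in> S\<close> by simp
  qed
  then show ?case by simp
next
  case (Suc t)
  show ?case
  proof (cases "S = {}")
    case False
    then obtain x where x: "x \<in> S" by blast
    define A where "A = {y \<in> S. E x y}"
    define B where "B = {y \<in> S. y \<noteq> x \<and> \<not> E x y}"
    have "finite S" using Suc.prems(1) finite_vertices finite_subset by blast
    then have "finite A" "finite B" unfolding A_def B_def by auto
    have "S = insert x (A \<union> B)" unfolding A_def B_def using x by auto
    then have "card S \<le> Suc (card A + card B)"
      using card_Un_le[of A B] \<open>finite A\<close> \<open>finite B\<close>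
      by (metis Suc_le_mono card_insert_if finite_UnI le_SucI)
    have "is_clique V E B"
      using Suc.prems(1) Suc.prems(2)[of x] x unfolding is_clique_def B_def by blast
    then have "card B \<le> Suc t" using Suc.prems(3) unfolding B_def by auto
    have "2 * card A \<le> t * (t + 3)"
    proof (rule Suc.IH)
      show "A \<subseteq> V" using Suc.prems(1) unfolding A_def by auto
      show "E a b \<or> E a c \<or> E b c"
        if "a \<in> A" "b \<in> A" "c \<in> A" "a \<noteq> b" "a \<noteq> c" "b \<noteq> c" for a b c
        using Suc.prems(2) that unfolding A_def by auto
      show "card K \<le> t" if K: "K \<subseteq> A" "is_clique V E K" for K
      proof -
        have "is_clique V E (insert x K)" "insert x K \<subseteq> S"
          using K x Suc.prems(1) adj_sym unfolding is_clique_def A_def by auto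
        then have "card (insert x K) \<le> Suc t" using Suc.prems(3) by blast
        moreover have "x \<notin> K" using K adj_irrefl unfolding A_def by auto
        moreover have "finite K" using K \<open>finite A\<close> finite_subset by blast
        ultimately show ?thesis by simp
      qed
    qed
    then show ?thesis
      using \<open>card S \<le> Suc (card A + card B)\<close> \<open>card B \<le> Suc t\<close> by (simp add: algebra_simps)
  qed simp
qed

end

locale claw_free_graph = finite_simple_graph +
  assumes claw_free: "claw_free V E"
begin

lemma no_claw:
  assumes "E c a" "E c b" "E c d" "a \<noteq> b" "a \<noteq> d" "b \<noteq> d" "\<not> E a b" "\<not> E a d" "\<not> E b d"
  shows False
  using assms adj_vertices claw_free unfolding claw_free_def nbhd_def by blast

lemma mem_nbhd_iff: "x \<in> nbhd V E v \<longleftrightarrow> E v x"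
  using adj_vertices unfolding nbhd_def by auto

definition nbhd_complement :: "'a \<Rightarrow> 'a \<Rightarrow> 'a \<Rightarrow> bool" where
  "nbhd_complement v a b \<longleftrightarrow> E v a \<and> E v b \<and> a \<noteq> b \<and> \<not> E a b"

lemma nbhd_complement_sym: "nbhd_complement v a b \<Longrightarrow> nbhd_complement v b a"
  unfolding nbhd_complement_def using adj_sym by blast

lemma nbhd_complement_irrefl: "\<not> nbhd_complement v a a"
  unfolding nbhd_complement_def by blast

lemma nbhd_complement_triangle_free:
  "nbhd_complement v a b \<Longrightarrow> nbhd_complement v b c \<Longrightarrow> nbhd_complement v a c \<Longrightarrow> False"
  unfolding nbhd_complement_def using no_claw[of v a b c] adj_sym by metis

lemma is_clique_if_nbhd_complement_free:
  assumes "K \<subseteq> nbhd V E v" "\<And>a b. a \<in> K \<Longrightarrow> b \<in> K \<Longrightarrow> \<not> nbhd_complement v a b"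
  shows "is_clique V E K"
  using assms unfolding is_clique_def nbhd_complement_def nbhd_def by blast

text \<open>If \<open>x\<close> and \<open>y\<close> had no common neighbour, the non-neighbours of \<open>x\<close> and those of \<open>y\<close> in
  \<open>N(v)\<close> would be two cliques (by claw-freeness at \<open>v\<close>) covering \<open>N(v)\<close>.\<close>
lemma nbhd_dist_le2_if_not_two_cliques:
  assumes not_cover: "\<not> (\<exists>K1 K2. is_clique V E K1 \<and> is_clique V E K2 \<and> nbhd V E v = K1 \<union> K2)"
    and x: "x \<in> nbhd V E v" and y: "y \<in> nbhd V E v" and "x \<noteq> y"
  shows "dist_le2 (V - {v}) (induced (V - {v}) E) x y"
proof (rule ccontr)
  assume far: "\<not> ?thesis"
  have "E v x" "E v y" using x y mem_nbhd_iff by auto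
  then have "x \<noteq> v" "y \<noteq> v" using adj_irrefl by auto
  then have "nbhd_complement v x y"
    using far \<open>E v x\<close> \<open>E v y\<close> \<open>x \<noteq> y\<close> adj_vertices
    unfolding dist_le2_def induced_def nbhd_complement_def by auto
  define K where "K z = {u \<in> nbhd V E v. nbhd_complement v z u}" for z
  have "is_clique V E (K z)" for z
    by (rule is_clique_if_nbhd_complement_free)
      (use nbhd_complement_triangle_free nbhd_complement_sym in \<open>auto simp: K_def\<close>)
  moreover have "nbhd V E v = K x \<union> K y"
  proof (intro equalityI subsetI)
    fix z assume z: "z \<in> nbhd V E v"
    have "z \<noteq> v" using z mem_nbhd_iff adj_irrefl by auto
    then have "\<not> (E x z \<and> E z y)"
      using far z \<open>x \<noteq> v\<close> \<open>y \<noteq> v\<close> adj_vertices unfolding dist_le2_def induced_def by auto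
    then show "z \<in> K x \<union> K y"
      using z \<open>nbhd_complement v x y\<close> mem_nbhd_iff adj_sym
      unfolding K_def nbhd_complement_def by auto
  qed (auto simp: K_def)
  ultimately show False using not_cover by blast
qed

lemma nbhd_complement_has_odd_closed_walk_if_not_two_cliques:
  assumes "\<not> (\<exists>K1 K2. is_clique V E K1 \<and> is_clique V E K2 \<and> nbhd V E v = K1 \<union> K2)"
  shows "has_odd_closed_walk (nbhd_complement v)"
proof (rule ccontr)
  assume no_odd: "\<not> ?thesis"
  obtain A B where "nbhd V E v = A \<union> B"
    and "\<And>x y. x \<in> A \<Longrightarrow> y \<in> A \<Longrightarrow> \<not> nbhd_complement v x y"
    and "\<And>x y. x \<in> B \<Longrightarrow> y \<in> B \<Longrightarrow> \<not> nbhd_complement v x y"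
    using bipartition_if_no_odd_closed_walk[OF nbhd_complement_sym no_odd] by blast
  then have "is_clique V E A" "is_clique V E B"
    by (auto intro: is_clique_if_nbhd_complement_free)
  then show False using assms \<open>nbhd V E v = A \<union> B\<close> by blast
qed

context
  fixes v :: 'a and f :: "nat \<Rightarrow> 'a" and k :: nat
  assumes cycle: "shortest_odd_closed_walk (nbhd_complement v) f k"
begin

lemma nbhd_cycle_edge: "i < k \<Longrightarrow> nbhd_complement v (f i) (f (Suc i))"
  using shortest_odd_closed_walk_edge[OF nbhd_complement_sym cycle] .

lemma nbhd_cycle_length: "5 \<le> k"
  using shortest_odd_closed_walk_length[OF nbhd_complement_sym cycle nbhd_complement_irrefl]
    nbhd_complement_triangle_free by blast

lemma nbhd_cycle_closed: "f k = f 0"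
  using cycle unfolding shortest_odd_closed_walk_def closed_walk_def by blast

lemma nbhd_cycle_in_nbhd: "i \<le> k \<Longrightarrow> E v (f i)"
  using nbhd_cycle_edge[of i] nbhd_cycle_edge[of "k - 1"] nbhd_cycle_length
  unfolding nbhd_complement_def by (cases "i = k") auto

lemma nbhd_cycle_wrap: "a \<le> k \<Longrightarrow> \<exists>i<k. f i = f a"
  using nbhd_cycle_closed nbhd_cycle_length
  by (cases "a = k") (auto intro: exI[of _ 0] exI[of _ a])

lemma nbhd_cycle_adj:
  assumes "i < j" "j < k" "j \<noteq> Suc i" "\<not> (i = 0 \<and> j = k - 1)"
  shows "E (f i) (f j)"
  using shortest_odd_closed_walk_chordless[OF nbhd_complement_sym cycle assms]
    shortest_odd_closed_walk_inj[OF nbhd_complement_sym cycle, of i j] nbhd_cycle_in_nbhd[of i]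
    nbhd_cycle_in_nbhd[of j] assms
  unfolding nbhd_complement_def by auto

context
  fixes u w :: 'a
  assumes u: "E v u" and w: "E u w" "\<not> E v w" "w \<noteq> v"
begin

text \<open>Some cycle edge \<open>f j f (j + 1)\<close> is complete to \<open>u\<close>; as it is a non-edge of \<open>G\<close>, the
  claw at \<open>u\<close> forces \<open>w\<close> onto it.\<close>
lemma second_nbhd_adj_nbhd_cycle: "\<exists>i<k. E (f i) w"
proof (cases "\<exists>i<k. u = f i")
  case True
  then show ?thesis using w by blast
next
  case off_cycle: False
  obtain j where j: "j < k" "\<not> nbhd_complement v u (f j)" "\<not> nbhd_complement v u (f (Suc j))"
    using shortest_odd_closed_walk_non_nbr_edge[OF nbhd_complement_sym cycle nbhd_complement_irrefl]
      nbhd_complement_triangle_free by blast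
  have "u \<noteq> f j" "u \<noteq> f (Suc j)"
    using off_cycle j nbhd_cycle_wrap[of "Suc j"] by (auto simp: Suc_le_eq)
  then have "E u (f j)" "E u (f (Suc j))"
    using j u nbhd_cycle_in_nbhd[of j] nbhd_cycle_in_nbhd[of "Suc j"]
    unfolding nbhd_complement_def by auto
  moreover have "f j \<noteq> f (Suc j)" "\<not> E (f j) (f (Suc j))"
    using nbhd_cycle_edge[OF j(1)] unfolding nbhd_complement_def by auto
  moreover have "w \<noteq> f j" "w \<noteq> f (Suc j)"
    using w nbhd_cycle_in_nbhd[of j] nbhd_cycle_in_nbhd[of "Suc j"] j by auto
  ultimately have "E w (f j) \<or> E w (f (Suc j))"
    using no_claw[of u w "f j" "f (Suc j)"] w by blast
  then obtain a where "a \<le> k" "E (f a) w" using j adj_sym Suc_leI less_imp_le by blast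
  then show ?thesis using nbhd_cycle_wrap by metis
qed

text \<open>A cycle vertex \<open>f i\<close> with \<open>2 < i\<close> is adjacent to two consecutive ones among \<open>f 0, f 1, f 2\<close>,
  so the claw at \<open>f i\<close> carries \<open>w\<close> over to one of them.\<close>
lemma second_nbhd_dominated_by_nbhd_cycle: "E (f 0) w \<or> E (f 1) w \<or> E (f 2) w"
proof -
  obtain i where i: "i < k" "E (f i) w" using second_nbhd_adj_nbhd_cycle by blast
  have k5: "5 \<le> k" by (rule nbhd_cycle_length)
  have notw: "w \<noteq> f a" if "a \<le> k" for a using w nbhd_cycle_in_nbhd[OF that] by auto
  have claw_at: "E w (f a) \<or> E w (f (Suc a))"
    if "a < k" "E (f i) (f a)" "E (f i) (f (Suc a))" for a
  proof -
    have "f a \<noteq> f (Suc a)" "\<not> E (f a) (f (Suc a))"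
      using nbhd_cycle_edge[OF that(1)] unfolding nbhd_complement_def by auto
    then show ?thesis
      using no_claw[OF i(2) that(2,3)] notw[of a] notw[of "Suc a"] that(1) by auto
  qed
  consider "i \<le> 2" | "i = k - 1" | "2 < i" "i < k - 1" using i(1) by linarith
  then show ?thesis
  proof cases
    case 1
    then show ?thesis using i by (auto simp: le_Suc_eq numeral_2_eq_2)
  next
    case 2
    then have "E w (f 1) \<or> E w (f 2)"
      using claw_at[of 1] nbhd_cycle_adj[of 1 i] nbhd_cycle_adj[of 2 i] k5 adj_sym
      by (simp add: numeral_2_eq_2)
    then show ?thesis using adj_sym by blast
  next
    case 3
    then have "E w (f 0) \<or> E w (f 1)"
      using claw_at[of 0] nbhd_cycle_adj[of 0 i] nbhd_cycle_adj[of 1 i] adj_sym by simp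
    then show ?thesis using adj_sym by blast
  qed
qed

end

end

end

section \<open>The degree bound\<close>

text \<open>The slack is \<open>(t - 2)\<^sup>2 / 2\<close>.\<close>
lemma degree_bound_arith:
  fixes d n t :: nat
  assumes "2 * n \<le> t * (t + 3)" "d \<le> n + 3 * t"
  shows "real d \<le> real (Suc t) ^ 2 + (real (Suc t) + 1) / 2"
proof -
  have "real (2 * n) \<le> real (t * (t + 3))" "real d \<le> real (n + 3 * t)"
    using assms by (simp_all only: of_nat_le_iff)
  then have "2 * real n \<le> real t * real t + 3 * real t" "real d \<le> real n + 3 * real t"
    by (simp_all add: algebra_simps)
  moreover have "0 \<le> real t * real t - 4 * real t + 4"
    using zero_le_power2[of "real t - 2"] by (simp add: power2_eq_square algebra_simps)
  moreover have "real (Suc t) ^ 2 = real t * real t + 2 * real t + 1"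
    by (simp add: power2_eq_square algebra_simps)
  ultimately show ?thesis by (simp add: field_simps)
qed

context claw_free_graph
begin

definition outer_nbrs :: "'a \<Rightarrow> 'a \<Rightarrow> 'a set" where
  "outer_nbrs v c = {u \<in> V. E c u \<and> \<not> E v u \<and> u \<noteq> v}"

lemma card_outer_nbrs_lt_clique_number:
  assumes "E v c"
  shows "card (outer_nbrs v c) < clique_number V E"
proof -
  have "E a b" if "a \<in> outer_nbrs v c" "b \<in> outer_nbrs v c" "a \<noteq> b" for a b
  proof (rule ccontr)
    assume "\<not> E a b"
    then show False
      using that no_claw[of c v a b] adj_sym[OF assms] unfolding outer_nbrs_def by auto
  qed
  moreover have "insert c (outer_nbrs v c) \<subseteq> V"
    using adj_vertices[OF assms] unfolding outer_nbrs_def by auto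
  moreover have "E c u" if "u \<in> outer_nbrs v c" for u
    using that unfolding outer_nbrs_def by auto
  ultimately have "is_clique V E (insert c (outer_nbrs v c))"
    unfolding is_clique_def by (blast intro: adj_sym)
  moreover have "c \<notin> outer_nbrs v c" "finite (outer_nbrs v c)"
    using assms adj_sym finite_vertices unfolding outer_nbrs_def by auto
  ultimately show ?thesis using card_clique_le_clique_number by fastforce
qed

lemma card_nbhd_le:
  assumes "v \<in> V" "clique_number V E = Suc t"
  shows "2 * card (nbhd V E v) \<le> t * (t + 3)"
proof (rule card_le_if_no_independent_triple)
  show "nbhd V E v \<subseteq> V" unfolding nbhd_def by auto
  show "E a b \<or> E a c \<or> E b c"
    if "a \<in> nbhd V E v" "b \<in> nbhd V E v" "c \<in> nbhd V E v" "a \<noteq> b" "a \<noteq> c" "b \<noteq> c" for a b c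
    using that no_claw[of v a b c] mem_nbhd_iff by blast
  show "card K \<le> t" if "K \<subseteq> nbhd V E v" "is_clique V E K" for K
  proof -
    have "is_clique V E (insert v K)"
      using that assms(1) mem_nbhd_iff adj_sym unfolding is_clique_def by auto
    moreover have "v \<notin> K" "finite K"
      using that adj_irrefl mem_nbhd_iff finite_vertices finite_subset[of K V]
      unfolding is_clique_def by auto
    ultimately show ?thesis using card_clique_le_clique_number assms(2) by fastforce
  qed
qed

lemma deg_sq_le_if_not_two_cliques:
  assumes v: "v \<in> V"
    and not_cover: "\<not> (\<exists>K1 K2. is_clique V E K1 \<and> is_clique V E K2 \<and> nbhd V E v = K1 \<union> K2)"
  shows "real (deg_sq V E v) \<le> real (clique_number V E) ^ 2 + (real (clique_number V E) + 1) / 2"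
proof -
  obtain f k where cycle: "shortest_odd_closed_walk (nbhd_complement v) f k"
    using shortest_odd_closed_walk_exists[OF
        nbhd_complement_has_odd_closed_walk_if_not_two_cliques[OF not_cover]] by blast
  have "is_clique V E {v}" using v unfolding is_clique_def by auto
  then have "1 \<le> clique_number V E" using card_clique_le_clique_number by fastforce
  then obtain t where t: "clique_number V E = Suc t" by (cases "clique_number V E") auto
  let ?O = "\<lambda>i. outer_nbrs v (f i)"
  have "{u \<in> V. u \<noteq> v \<and> dist_le2 V E v u} \<subseteq> nbhd V E v \<union> ?O 0 \<union> ?O 1 \<union> ?O 2"
  proof
    fix w assume w: "w \<in> {u \<in> V. u \<noteq> v \<and> dist_le2 V E v u}"
    show "w \<in> nbhd V E v \<union> ?O 0 \<union> ?O 1 \<union> ?O 2"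
    proof (cases "E v w")
      case False
      then obtain u where "E v u" "E u w" using w unfolding dist_le2_def by blast
      then have "E (f 0) w \<or> E (f 1) w \<or> E (f 2) w"
        using second_nbhd_dominated_by_nbhd_cycle[OF cycle] False w by blast
      then show ?thesis using False w unfolding outer_nbrs_def by blast
    qed (use w mem_nbhd_iff in blast)
  qed
  then have "deg_sq V E v \<le> card (nbhd V E v \<union> ?O 0 \<union> ?O 1 \<union> ?O 2)"
    unfolding deg_sq_def using finite_vertices
    by (intro card_mono) (auto simp: nbhd_def outer_nbrs_def)
  also have "\<dots> \<le> card (nbhd V E v) + card (?O 0) + card (?O 1) + card (?O 2)"
    by (meson add_le_mono card_Un_le le_refl order_trans)
  also have "\<dots> \<le> card (nbhd V E v) + 3 * t"
  proof -
    have "card (?O i) \<le> t" if "i \<le> 2" for i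
    proof -
      have "i \<le> k" using that nbhd_cycle_length[OF cycle] by simp
      then show ?thesis
        using card_outer_nbrs_lt_clique_number[OF nbhd_cycle_in_nbhd[OF cycle]] t
        by (simp add: less_Suc_eq_le)
    qed
    from this[of 0] this[of 1] this[of 2] show ?thesis by simp
  qed
  finally show ?thesis using degree_bound_arith[OF card_nbhd_le[OF v t]] t by simp
qed

end

theorem mainTheorem2:
  fixes V :: "'a set" and E :: "'a \<Rightarrow> 'a \<Rightarrow> bool"
  assumes "simple_graph V E" and "claw_free V E"
  shows "quasi_line V E \<or>
    (\<exists>v\<in>V. real (deg_sq V E v) \<le> real (clique_number V E) ^ 2 + (real (clique_number V E) + 1) / 2
       \<and> (\<forall>x\<in>nbhd V E v. \<forall>y\<in>nbhd V E v. x \<noteq> y \<longrightarrow>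
             dist_le2 (V - {v}) (induced (V - {v}) E) x y))"
proof (cases "quasi_line V E")
  case False
  then obtain v where v: "v \<in> V"
    and not_cover: "\<not> (\<exists>K1 K2. is_clique V E K1 \<and> is_clique V E K2 \<and> nbhd V E v = K1 \<union> K2)"
    unfolding quasi_line_def by blast
  interpret claw_free_graph V E
    by unfold_locales (use assms in auto)
  show ?thesis
    using v deg_sq_le_if_not_two_cliques[OF v not_cover]
      nbhd_dist_le2_if_not_two_cliques[OF not_cover] by blast
qed simp

end
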